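(* Let $n\ge1$, let $\|\cdot\|$ be a norm on $\mathbb R^n$, and let $H=(h_1,\dots,h_n)$ be a continuous map from an open set of $\mathbb R^{4n+1}$ to $\mathbb R^n$, written $H(t;\zeta^0,\zeta^1;\xi^0,\xi^1)$ with $t\in\mathbb R$, $\zeta^0,\zeta^1,\xi^0,\xi^1\in\mathbb R^n$. Assume $P=(p_1,\dots,p_n)$ satisfies $P=H(0;\mathbf 0,\mathbf 0;P,P)$ and $|p_1|\le1$. Let $\mathcal P=(0;\mathbf0,\mathbf0;P,P)$ and, for $\varepsilon>0$, $$N_\varepsilon(\mathcal P)=\{(t;\zeta^0,\zeta^1;\xi^0,\xi^1):|t|+\|\zeta^0\|+\|\zeta^1\|+\|\xi^0-P\|+\|\xi^1-P\|\le\varepsilon\},$$ and suppose $N_\varepsilon(\mathcal P)$ lies in the domain of $H$ and: (i) there is $\Lambda>0$ with $\|H(\bar t;\zeta^0,\zeta^1;\xi^0,\xi^1)-H(t;\zeta^0,\zeta^1;\xi^0,\xi^1)\|\le\Lambda|\bar t-t|$ whenever both points are in $N_\varepsilon(\mathcal P)$; (ii) there are $L_0,L_1>0$ with $\|H(t;\bar\zeta^0,\bar\zeta^1;\xi^0,\xi^1)-H(t;\zeta^0,\zeta^1;\xi^0,\xi^1)\|\le L_0\|\bar\zeta^0-\zeta^0\|+L_1\|\bar\zeta^1-\zeta^1\|$ whenever both points are in $N_\varepsilon(\mathcal P)$; (iii) there are $C_0,C_1\ge0$ with $C_0+C_1<1$ and $\|H(t;\zeta^0,\zeta^1;\bar\xi^0,\bar\xi^1)-H(t;\zeta^0,\zeta^1;\xi^0,\xi^1)\|\le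 C_0\|\bar\xi^0-\xi^0\|+C_1\|\bar\xi^1-\xi^1\|$ whenever both points are in $N_\varepsilon(\mathcal P)$; (iv) $|h_1(X)|\le1$ for all $X\in N_\varepsilon(\mathcal P)$. Then there exist $\delta>0$ and $Z=(z_1,\dots,z_n)\in C^1([-\delta,\delta];\mathbb R^n)$ with $|z_1(t)|\le|t|$ and $(t;Z(t),Z(z_1(t));Z'(t),Z'(z_1(t)))\in N_\varepsilon(\mathcal P)$ for $|t|\le\delta$, such that $$Z'(t)=H\big(t;Z(t),Z(z_1(t));Z'(t),Z'(z_1(t))\big)\ \ (|t|\le\delta),\qquad Z(0)=0,\qquad Z'(0)=P.$$
   Context: Here $Z(z_1(t))$ denotes $(z_1(z_1(t)),\dots,z_n(z_1(t)))$ and similarly for $Z'(z_1(t))$. *)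

theory Defs
  imports "HOL-Analysis.Analysis"
begin

definition is_norm :: "(real^'n \<Rightarrow> real) \<Rightarrow> bool" where
  "is_norm nrm \<longleftrightarrow>
     (\<forall>x. 0 \<le> nrm x) \<and> (\<forall>x. nrm x = 0 \<longleftrightarrow> x = 0) \<and>
     (\<forall>c x. nrm (c *\<^sub>R x) = \<bar>c\<bar> * nrm x) \<and>
     (\<forall>x y. nrm (x + y) \<le> nrm x + nrm y)"

definition Neps ::
  "(real^'n \<Rightarrow> real) \<Rightarrow> real^'n \<Rightarrow> real \<Rightarrow>
   (real \<times> (real^'n) \<times> (real^'n) \<times> (real^'n) \<times> (real^'n)) set" where
  "Neps nrm P \<epsilon> = {(t, z0, z1, x0, x1).
      \<bar>t\<bar> + nrm z0 + nrm z1 + nrm (x0 - P) + nrm (x1 - P) \<le> \<epsilon>}"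

end

theory Submission
  imports Defs
begin

text \<open>
  The derivative W = Z' is obtained as a fixed point of the map
  W \<mapsto> (\<lambda>t. H (t, Z(t), Z(z1(t)), W(t), W(z1(t)))), where Z is the primitive of W with Z(0) = 0 and
  z1 is its first component, on the class of functions on [-\<delta>, \<delta>] with W(0) = P, first component
  bounded by 1, and a fixed Lipschitz constant K for the given norm. The bound on the first
  component gives |z1(t)| \<le> |t|, so the delayed argument never leaves [-\<delta>, \<delta>]. Changing one
  group of arguments of H at a time, hypotheses (i)-(iii) show that the map preserves the class as
  soon as (1 - C0 - C1) K \<ge> \<Lambda> + (L0 + L1) Lip(Z), and that it contracts the sup distance with
  factor C0 + C1 + O(\<delta>). The class is closed under pointwise limits, so the Picard iterates
  converge to the fixed point.
\<close>

locale vector_norm =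
  fixes nrm :: "real^'n \<Rightarrow> real"
  assumes is_norm: "is_norm nrm"
begin

lemma nrm_nonneg: "0 \<le> nrm x"
  using is_norm by (simp add: is_norm_def)

lemma nrm_eq_0_iff [simp]: "nrm x = 0 \<longleftrightarrow> x = 0"
  using is_norm by (simp add: is_norm_def)

lemma nrm_zero [simp]: "nrm 0 = 0"
  by simp

lemma nrm_scaleR: "nrm (a *\<^sub>R x) = \<bar>a\<bar> * nrm x"
  using is_norm by (simp add: is_norm_def)

lemma nrm_triangle: "nrm (x + y) \<le> nrm x + nrm y"
  using is_norm by (simp add: is_norm_def)

lemma nrm_minus_commute: "nrm (x - y) = nrm (y - x)"
  using nrm_scaleR[of "-1" "x - y"] by simp

lemma nrm_triangle_diff: "nrm (x - z) \<le> nrm (x - y) + nrm (y - z)"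
  using nrm_triangle[of "x - y" "y - z"] by simp

lemma nrm_sum_le: "nrm (sum f S) \<le> (\<Sum>i\<in>S. nrm (f i))"
proof (induction S rule: infinite_finite_induct)
  case (insert x S)
  then show ?case using nrm_triangle[of "f x" "sum f S"] by simp
qed simp_all

lemma nrm_le_norm:
  obtains A where "A > 0" "\<And>x. nrm x \<le> A * norm x"
proof
  define A where "A = 1 + (\<Sum>i\<in>UNIV. nrm (axis i (1::real)))"
  show "A > 0"
    unfolding A_def by (simp add: sum_nonneg add_pos_nonneg nrm_nonneg)
  fix x :: "real^'n"
  have "nrm x = nrm (\<Sum>i\<in>UNIV. (x $ i) *\<^sub>R axis i 1)"
    using basis_expansion[of x] by (simp add: scalar_mult_eq_scaleR)
  also have "\<dots> \<le> (\<Sum>i\<in>UNIV. \<bar>x $ i\<bar> * nrm (axis i (1::real)))"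
    using nrm_sum_le[of "\<lambda>i. (x $ i) *\<^sub>R axis i 1" UNIV] by (simp add: nrm_scaleR)
  also have "\<dots> \<le> (\<Sum>i\<in>UNIV. norm x * nrm (axis i (1::real)))"
    by (intro sum_mono mult_right_mono component_le_norm_cart nrm_nonneg)
  also have "\<dots> \<le> A * norm x"
    unfolding A_def by (simp add: sum_distrib_left[symmetric] algebra_simps)
  finally show "nrm x \<le> A * norm x" .
qed

lemma continuous_on_nrm: "continuous_on S nrm"
proof -
  obtain A where A: "A > 0" "\<And>x. nrm x \<le> A * norm x"
    using nrm_le_norm by blast
  have "A-lipschitz_on UNIV nrm"
  proof (rule lipschitz_onI)
    fix x y :: "real^'n"
    have "\<bar>nrm x - nrm y\<bar> \<le> nrm (x - y)"
      using nrm_triangle_diff[of x 0 y] nrm_triangle_diff[of y 0 x] nrm_minus_commute[of x y]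
      by (simp add: abs_le_iff)
    also have "\<dots> \<le> A * dist x y"
      using A(2) by (simp add: dist_norm)
    finally show "dist (nrm x) (nrm y) \<le> A * dist x y"
      by (simp add: dist_real_def)
  qed (use A in simp)
  then show ?thesis
    by (meson continuous_on_subset lipschitz_on_continuous_on subset_UNIV)
qed

lemma tendsto_nrm: "(X \<longlongrightarrow> x) F \<Longrightarrow> ((\<lambda>k. nrm (X k)) \<longlongrightarrow> nrm x) F"
  using continuous_on_nrm[of UNIV] by (simp add: continuous_on_eq_continuous_at isCont_tendsto_compose)

lemma norm_le_nrm:
  obtains B where "B > 0" "\<And>x. norm x \<le> B * nrm x"
proof -
  let ?S = "sphere (0::real^'n) 1"
  have "axis undefined (1::real) \<in> ?S"
    by simp
  then obtain x0 where x0: "x0 \<in> ?S" "\<And>y. y \<in> ?S \<Longrightarrow> nrm x0 \<le> nrm y"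
    using continuous_attains_inf[OF compact_sphere _ continuous_on_nrm] by blast
  then have m: "nrm x0 > 0"
    using nrm_nonneg[of x0] by (auto simp: less_le)
  have "norm x \<le> (1 / nrm x0) * nrm x" for x
  proof (cases "x = 0")
    case False
    then have "nrm x0 \<le> nrm ((1 / norm x) *\<^sub>R x)"
      by (intro x0(2)) simp
    then show ?thesis
      using False m by (simp add: nrm_scaleR field_simps)
  qed simp
  with m that show ?thesis
    by (meson divide_pos_pos zero_less_one)
qed

lemma equivalence_constant:
  obtains c where "1 \<le> c" "\<And>x. nrm x \<le> c * norm x" "\<And>x. norm x \<le> c * nrm x"
proof -
  obtain A where A: "A > 0" "\<And>x. nrm x \<le> A * norm x"
    using nrm_le_norm by blast
  obtain B where B: "B > 0" "\<And>x. norm x \<le> B * nrm x"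
    using norm_le_nrm by blast
  let ?c = "max 1 (max A B)"
  have "nrm x \<le> ?c * norm x" for x
  proof -
    have "A * norm x \<le> ?c * norm x"
      by (intro mult_right_mono) auto
    then show ?thesis using A(2)[of x] by linarith
  qed
  moreover have "norm x \<le> ?c * nrm x" for x
  proof -
    have "B * nrm x \<le> ?c * nrm x"
      by (intro mult_right_mono) (auto simp: nrm_nonneg)
    then show ?thesis using B(2)[of x] by linarith
  qed
  ultimately show ?thesis
    by (intro that[of ?c]) auto
qed

end

lemma norm_diff_le_of_vector_derivative:
  fixes f :: "real \<Rightarrow> 'b::real_normed_vector"
  assumes "\<And>t. t \<in> {a..b} \<Longrightarrow> (f has_vector_derivative f' t) (at t within {a..b})"
    and "\<And>t. t \<in> {a..b} \<Longrightarrow> norm (f' t) \<le> M"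
    and "x \<in> {a..b}" "y \<in> {a..b}"
  shows "norm (f x - f y) \<le> M * \<bar>x - y\<bar>"
proof -
  have "norm (f x - f y) \<le> M * norm (x - y)"
  proof (rule differentiable_bound[of "{a..b}" f "\<lambda>t h. h *\<^sub>R f' t" M x y])
    show "\<And>t. t \<in> {a..b} \<Longrightarrow> (f has_derivative (\<lambda>h. h *\<^sub>R f' t)) (at t within {a..b})"
      using assms(1) by (simp add: has_vector_derivative_def)
    show "onorm (\<lambda>h. h *\<^sub>R f' t) \<le> M" if "t \<in> {a..b}" for t
      using assms(2)[OF that] onorm_scaleR_left[OF bounded_linear_ident, of "f' t"] onorm_id[where 'a=real]
      by simp
  qed (use assms in auto)
  then show ?thesis
    by simp
qed

locale equivalent_norm = vector_norm nrm for nrm :: "real^'n \<Rightarrow> real" +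
  fixes c :: real
  assumes c_ge_1: "1 \<le> c"
    and nrm_le_c_norm: "nrm x \<le> c * norm x"
    and norm_le_c_nrm: "norm x \<le> c * nrm x"
begin

lemma abs_component_le_nrm: "\<bar>x $ i\<bar> \<le> c * nrm x"
  using component_le_norm_cart[of x i] norm_le_c_nrm[of x] by linarith

lemma nrm_diff_le_of_vector_derivative:
  assumes "\<And>t. t \<in> {a..b} \<Longrightarrow> (f has_vector_derivative f' t) (at t within {a..b})"
    and "\<And>t. t \<in> {a..b} \<Longrightarrow> nrm (f' t) \<le> M"
    and "x \<in> {a..b}" "y \<in> {a..b}"
  shows "nrm (f x - f y) \<le> c\<^sup>2 * M * \<bar>x - y\<bar>"
proof -
  have bound: "norm (f' t) \<le> c * M" if "t \<in> {a..b}" for t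
    using norm_le_c_nrm[of "f' t"] mult_left_mono[OF assms(2)[OF that], of c] c_ge_1 by linarith
  have "norm (f x - f y) \<le> c * M * \<bar>x - y\<bar>"
    by (rule norm_diff_le_of_vector_derivative[OF assms(1) bound assms(3,4)])
  then have "c * norm (f x - f y) \<le> c * (c * M * \<bar>x - y\<bar>)"
    using c_ge_1 by simp
  then show ?thesis
    using nrm_le_c_norm[of "f x - f y"] by (simp add: power2_eq_square mult.assoc)
qed

lemma geometric_iteration_converges:
  fixes x :: "nat \<Rightarrow> real^'n"
  assumes step: "\<And>k. nrm (x (Suc k) - x k) \<le> D * q ^ k" and q: "0 \<le> q" "q < 1"
  shows "convergent x" and "nrm (lim x - x k) \<le> D * q ^ k / (1 - q)"
proof -
  have "summable (\<lambda>k. c * D * q ^ k)"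
    using q by (intro summable_mult summable_geometric) simp
  moreover have "norm (x (Suc k) - x k) \<le> c * D * q ^ k" for k
    using order_trans[OF norm_le_c_nrm mult_left_mono[OF step]] c_ge_1 by (simp add: mult.assoc)
  ultimately have "summable (\<lambda>k. x (Suc k) - x k)"
    by (rule summable_comparison_test'[where N=0])
  then have "(\<lambda>k. x 0 + (\<Sum>j<k. x (Suc j) - x j)) \<longlonglongrightarrow> x 0 + (\<Sum>j. x (Suc j) - x j)"
    by (intro tendsto_add tendsto_const summable_LIMSEQ)
  then show conv: "convergent x"
    by (auto simp: sum_lessThan_telescope convergent_def)
  have tail: "nrm (x m - x k) \<le> D * (q ^ k - q ^ m) / (1 - q)" if "k \<le> m" for m
    using that
  proof (induction m rule: dec_induct)
    case (step m)
    have "nrm (x (Suc m) - x k) \<le> D * q ^ m + D * (q ^ k - q ^ m) / (1 - q)"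
      using nrm_triangle_diff[of "x (Suc m)" "x k" "x m"] assms(1)[of m] step.IH by linarith
    also have "\<dots> = D * (q ^ k - q ^ Suc m) / (1 - q)"
      using q by (simp add: field_simps)
    finally show ?case .
  qed simp
  have "D \<ge> 0"
    using step[of 0] nrm_nonneg[of "x 1 - x 0"] by simp
  then have "D * (q ^ k - q ^ m) / (1 - q) \<le> D * q ^ k / (1 - q)" for m
    using q by (intro divide_right_mono mult_left_mono) auto
  then have "nrm (x m - x k) \<le> D * q ^ k / (1 - q)" if "k \<le> m" for m
    using tail[OF that] order_trans by blast
  then show "nrm (lim x - x k) \<le> D * q ^ k / (1 - q)"
    using conv by (intro LIMSEQ_le_const2[OF tendsto_nrm, of "\<lambda>m. x m - x k"])
      (auto intro: tendsto_diff simp: convergent_LIMSEQ_iff)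
qed

lemma contraction_fixed_point:
  fixes T :: "('a \<Rightarrow> real^'n) \<Rightarrow> 'a \<Rightarrow> real^'n"
  assumes S_init: "S W_init"
    and S_T: "\<And>W. S W \<Longrightarrow> S (T W)"
    and contraction: "\<And>W V d. S W \<Longrightarrow> S V \<Longrightarrow> \<forall>t\<in>I. nrm (W t - V t) \<le> d \<Longrightarrow>
      \<forall>t\<in>I. nrm (T W t - T V t) \<le> q * d"
    and q: "0 \<le> q" "q < 1"
    and first_step: "\<And>t. t \<in> I \<Longrightarrow> nrm (T W_init t - W_init t) \<le> D"
    and S_closed: "\<And>f g. (\<And>k. S (f k)) \<Longrightarrow> (\<And>t. t \<in> I \<Longrightarrow> (\<lambda>k. f k t) \<longlonglongrightarrow> g t) \<Longrightarrow> S g"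
  obtains W where "S W" "\<And>t. t \<in> I \<Longrightarrow> T W t = W t"
proof -
  define f where "f k = (T ^^ k) W_init" for k
  have S_f: "S (f k)" for k
    by (induction k) (simp_all add: f_def S_init S_T)
  have step: "\<forall>t\<in>I. nrm (f (Suc k) t - f k t) \<le> D * q ^ k" for k
  proof (induction k)
    case (Suc k)
    have "\<forall>t\<in>I. nrm (T (f (Suc k)) t - T (f k) t) \<le> q * (D * q ^ k)"
      using contraction[OF S_f S_f Suc.IH] .
    then show ?case
      by (simp add: f_def mult_ac)
  qed (simp add: f_def first_step)
  define g where "g t = lim (\<lambda>k. f k t)" for t
  have f_g: "(\<lambda>k. f k t) \<longlonglongrightarrow> g t" and g_f: "nrm (g t - f k t) \<le> D * q ^ k / (1 - q)"
    if "t \<in> I" for t k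
    using geometric_iteration_converges[of "\<lambda>k. f k t" D q] step that q
    by (auto simp: g_def convergent_LIMSEQ_iff)
  have S_g: "S g"
    using S_closed[OF S_f f_g] .
  have "nrm (T g t - g t) \<le> 2 * D / (1 - q) * q ^ Suc k" if t: "t \<in> I" for t k
  proof -
    have "\<forall>t\<in>I. nrm (T g t - T (f k) t) \<le> q * (D * q ^ k / (1 - q))"
      using g_f by (intro contraction[OF S_g S_f]) blast
    then have "nrm (T g t - f (Suc k) t) \<le> D * q ^ Suc k / (1 - q)"
      using t by (simp add: f_def mult_ac)
    moreover have "nrm (f (Suc k) t - g t) \<le> D * q ^ Suc k / (1 - q)"
      using g_f[OF t, of "Suc k"] nrm_minus_commute by metis
    moreover have "2 * D / (1 - q) * q ^ Suc k = D * q ^ Suc k / (1 - q) + D * q ^ Suc k / (1 - q)"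
      by (simp add: field_simps)
    ultimately show ?thesis
      using nrm_triangle_diff[of "T g t" "g t" "f (Suc k) t"] by linarith
  qed
  moreover have "(\<lambda>k. 2 * D / (1 - q) * q ^ Suc k) \<longlonglongrightarrow> 0"
    using q by (intro tendsto_mult_right_zero LIMSEQ_power_zero LIMSEQ_Suc) simp
  ultimately have "nrm (T g t - g t) \<le> 0" if "t \<in> I" for t
    using that by (intro LIMSEQ_le_const) auto
  then show ?thesis
    using that S_g nrm_nonneg by (metis antisym eq_iff_diff_eq_0 nrm_eq_0_iff)
qed

end

locale neutral_delay_equation = equivalent_norm nrm c for nrm :: "real^'n \<Rightarrow> real" and c +
  fixes H :: "real \<times> (real^'n) \<times> (real^'n) \<times> (real^'n) \<times> (real^'n) \<Rightarrow> real^'n"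
    and P :: "real^'n"
    and i1 :: 'n
    and \<epsilon> \<Lambda> L0 L1 C0 C1 :: real
  assumes P_fix: "P = H (0, 0, 0, P, P)"
    and P1: "\<bar>P $ i1\<bar> \<le> 1"
    and eps: "\<epsilon> > 0"
    and Lam: "\<Lambda> \<ge> 0"
    and lip_t: "\<And>t t' z0 z1 x0 x1.
        (t, z0, z1, x0, x1) \<in> Neps nrm P \<epsilon> \<Longrightarrow> (t', z0, z1, x0, x1) \<in> Neps nrm P \<epsilon> \<Longrightarrow>
        nrm (H (t', z0, z1, x0, x1) - H (t, z0, z1, x0, x1)) \<le> \<Lambda> * \<bar>t' - t\<bar>"
    and L: "L0 \<ge> 0" "L1 \<ge> 0"
    and lip_z: "\<And>t z0 z1 z0' z1' x0 x1.
        (t, z0, z1, x0, x1) \<in> Neps nrm P \<epsilon> \<Longrightarrow> (t, z0', z1', x0, x1) \<in> Neps nrm P \<epsilon> \<Longrightarrow>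
        nrm (H (t, z0', z1', x0, x1) - H (t, z0, z1, x0, x1))
          \<le> L0 * nrm (z0' - z0) + L1 * nrm (z1' - z1)"
    and C: "C0 \<ge> 0" "C1 \<ge> 0" "C0 + C1 < 1"
    and lip_x: "\<And>t z0 z1 x0 x1 x0' x1'.
        (t, z0, z1, x0, x1) \<in> Neps nrm P \<epsilon> \<Longrightarrow> (t, z0, z1, x0', x1') \<in> Neps nrm P \<epsilon> \<Longrightarrow>
        nrm (H (t, z0, z1, x0', x1') - H (t, z0, z1, x0, x1))
          \<le> C0 * nrm (x0' - x0) + C1 * nrm (x1' - x1)"
    and h1_bound: "\<And>X. X \<in> Neps nrm P \<epsilon> \<Longrightarrow> \<bar>H X $ i1\<bar> \<le> 1"
begin

definition W_bound :: real where "W_bound = nrm P + 1"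

definition Z_lip :: real where "Z_lip = c\<^sup>2 * W_bound"

definition W_lip :: real where "W_lip = (\<Lambda> + (L0 + L1) * Z_lip) / (1 - (C0 + C1))"

text \<open>The coefficient of \<delta> * d in the estimate of \<open>state_map_contraction\<close>.\<close>

definition gain :: real where
  "gain = c\<^sup>2 * L0 + L1 * (c ^ 3 * Z_lip + c\<^sup>2) + c ^ 3 * C1 * W_lip"

text \<open>
  The three bounds keep nrm (W t) \<le> W_bound, keep every state inside N_eps(P), and make the
  contraction factor at most (1 + C0 + C1) / 2.
\<close>

definition \<delta> :: real where
  "\<delta> = min (1 / (W_lip + 1))
      (min (\<epsilon> / (1 + 2 * Z_lip + 2 * W_lip)) ((1 - (C0 + C1)) / (2 * gain + 1)))"

abbreviation I :: "real set" where "I \<equiv> {-\<delta>..\<delta>}"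

text \<open>Integrating from the left end of I makes the fundamental theorem of calculus available
  at every point of I.\<close>

definition primitive :: "(real \<Rightarrow> real^'n) \<Rightarrow> real \<Rightarrow> real^'n" where
  "primitive W t = integral {-\<delta>..t} W - integral {-\<delta>..0} W"

definition delay_time :: "(real \<Rightarrow> real^'n) \<Rightarrow> real \<Rightarrow> real" where
  "delay_time W t = primitive W t $ i1"

definition state ::
  "(real \<Rightarrow> real^'n) \<Rightarrow> real \<Rightarrow> real \<times> (real^'n) \<times> (real^'n) \<times> (real^'n) \<times> (real^'n)" where
  "state W t = (t, primitive W t, primitive W (delay_time W t), W t, W (delay_time W t))"

definition admissible :: "(real \<Rightarrow> real^'n) \<Rightarrow> bool" where
  "admissible W \<longleftrightarrow> W 0 = P \<and> (\<forall>s\<in>I. \<forall>t\<in>I. nrm (W s - W t) \<le> W_lip * \<bar>s - t\<bar>)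
     \<and> (\<forall>t\<in>I. \<bar>W t $ i1\<bar> \<le> 1)"

lemma W_bound_pos: "0 < W_bound"
  using nrm_nonneg[of P] by (simp add: W_bound_def)

lemma Z_lip_nonneg: "0 \<le> Z_lip"
  using W_bound_pos by (simp add: Z_lip_def)

lemma W_lip_nonneg: "0 \<le> W_lip"
  using Lam L C Z_lip_nonneg by (simp add: W_lip_def)

lemma W_lip_eq: "\<Lambda> + (L0 + L1) * Z_lip + (C0 + C1) * W_lip = W_lip"
  using C by (simp add: W_lip_def field_simps)

lemma gain_nonneg: "0 \<le> gain"
  using L C c_ge_1 Z_lip_nonneg W_lip_nonneg by (simp add: gain_def)

lemma \<delta>_pos: "0 < \<delta>"
  using eps C W_lip_nonneg Z_lip_nonneg gain_nonneg by (simp add: \<delta>_def)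

lemma W_lip_\<delta>_le_1: "W_lip * \<delta> \<le> 1"
proof -
  have "\<delta> * (W_lip + 1) \<le> 1"
    using W_lip_nonneg by (simp add: \<delta>_def min_def field_simps)
  then show ?thesis
    using \<delta>_pos by (simp add: algebra_simps)
qed

lemma \<delta>_le_\<epsilon>: "\<delta> * (1 + 2 * Z_lip + 2 * W_lip) \<le> \<epsilon>"
proof -
  have "\<delta> \<le> \<epsilon> / (1 + 2 * Z_lip + 2 * W_lip)"
    by (simp add: \<delta>_def)
  then show ?thesis
    using W_lip_nonneg Z_lip_nonneg by (simp add: field_simps)
qed

lemma \<delta>_gain_le: "\<delta> * gain \<le> (1 - (C0 + C1)) / 2"
proof -
  have "\<delta> \<le> (1 - (C0 + C1)) / (2 * gain + 1)"
    by (simp add: \<delta>_def)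
  then have "\<delta> * (2 * gain + 1) \<le> 1 - (C0 + C1)"
    using gain_nonneg by (simp add: field_simps)
  then show ?thesis
    using \<delta>_pos by (simp add: algebra_simps)
qed

lemma in_Neps_if_close:
  assumes "\<bar>s\<bar> \<le> \<delta>" "nrm z0 \<le> Z_lip * \<delta>" "nrm z1 \<le> Z_lip * \<delta>"
    and "nrm (x0 - P) \<le> W_lip * \<delta>" "nrm (x1 - P) \<le> W_lip * \<delta>"
  shows "(s, z0, z1, x0, x1) \<in> Neps nrm P \<epsilon>"
  using assms \<delta>_le_\<epsilon> by (simp add: Neps_def algebra_simps)

lemma zero_in_I: "0 \<in> I"
  using \<delta>_pos by simp

lemma admissible_lipschitz:
  "admissible W \<Longrightarrow> s \<in> I \<Longrightarrow> t \<in> I \<Longrightarrow> nrm (W s - W t) \<le> W_lip * \<bar>s - t\<bar>"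
  by (simp add: admissible_def)

lemma admissible_component_bound: "admissible W \<Longrightarrow> t \<in> I \<Longrightarrow> \<bar>W t $ i1\<bar> \<le> 1"
  by (simp add: admissible_def)

lemma admissible_dist_P:
  assumes "admissible W" "t \<in> I"
  shows "nrm (W t - P) \<le> W_lip * \<delta>"
proof -
  have "nrm (W t - W 0) \<le> W_lip * \<bar>t - 0\<bar>"
    using admissible_lipschitz[OF assms zero_in_I] .
  also have "\<dots> \<le> W_lip * \<delta>"
    using assms(2) W_lip_nonneg by (intro mult_left_mono) auto
  finally show ?thesis
    using assms(1) by (simp add: admissible_def)
qed

lemma admissible_nrm_le:
  assumes "admissible W" "t \<in> I"
  shows "nrm (W t) \<le> W_bound"
  using nrm_triangle[of "W t - P" P] admissible_dist_P[OF assms] W_lip_\<delta>_le_1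
  by (simp add: W_bound_def)

lemma admissible_continuous_on:
  assumes "admissible W"
  shows "continuous_on I W"
proof (rule lipschitz_on_continuous_on)
  show "(c * W_lip)-lipschitz_on I W"
  proof (rule lipschitz_onI)
    fix s t assume "s \<in> I" "t \<in> I"
    then have "nrm (W s - W t) \<le> W_lip * \<bar>s - t\<bar>"
      by (rule admissible_lipschitz[OF assms])
    then have "c * nrm (W s - W t) \<le> c * (W_lip * \<bar>s - t\<bar>)"
      using c_ge_1 by simp
    then show "dist (W s) (W t) \<le> c * W_lip * dist s t"
      using norm_le_c_nrm[of "W s - W t"] by (simp add: dist_norm dist_real_def mult.assoc)
  qed (use c_ge_1 W_lip_nonneg in simp)
qed

lemma primitive_0 [simp]: "primitive W 0 = 0"
  by (simp add: primitive_def)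

lemma primitive_has_vector_derivative:
  assumes "continuous_on I W" "t \<in> I"
  shows "(primitive W has_vector_derivative W t) (at t within I)"
  using integral_has_vector_derivative[OF assms] unfolding primitive_def
  by (intro has_vector_derivative_diff[where g'=0, simplified] has_vector_derivative_const)

lemma primitive_lipschitz:
  assumes "admissible W" "s \<in> I" "t \<in> I"
  shows "nrm (primitive W s - primitive W t) \<le> Z_lip * \<bar>s - t\<bar>"
  unfolding Z_lip_def
  by (rule nrm_diff_le_of_vector_derivative[OF
        primitive_has_vector_derivative[OF admissible_continuous_on[OF assms(1)]]
        admissible_nrm_le[OF assms(1)] assms(2,3)])

lemma nrm_primitive_le:
  assumes "admissible W" "t \<in> I"
  shows "nrm (primitive W t) \<le> Z_lip * \<delta>"
proof -
  have "nrm (primitive W t) \<le> Z_lip * \<bar>t\<bar>"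
    using primitive_lipschitz[OF assms zero_in_I] by simp
  also have "\<dots> \<le> Z_lip * \<delta>"
    using assms(2) Z_lip_nonneg by (intro mult_left_mono) auto
  finally show ?thesis .
qed

lemma delay_time_lipschitz:
  assumes "admissible W" "s \<in> I" "t \<in> I"
  shows "\<bar>delay_time W s - delay_time W t\<bar> \<le> \<bar>s - t\<bar>"
proof -
  have "((\<lambda>u. primitive W u $ i1) has_vector_derivative W u $ i1) (at u within I)" if "u \<in> I" for u
    using bounded_linear.has_vector_derivative[OF bounded_linear_vec_nth
        primitive_has_vector_derivative[OF admissible_continuous_on[OF assms(1)] that]]
    by simp
  then have "norm (delay_time W s - delay_time W t) \<le> 1 * \<bar>s - t\<bar>"
    unfolding delay_time_def using admissible_component_bound[OF assms(1)] assms(2,3)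
    by (intro norm_diff_le_of_vector_derivative[where f'="\<lambda>u. W u $ i1"]) auto
  then show ?thesis
    by simp
qed

lemma abs_delay_time_le: "admissible W \<Longrightarrow> t \<in> I \<Longrightarrow> \<bar>delay_time W t\<bar> \<le> \<bar>t\<bar>"
  using delay_time_lipschitz[of W t 0] zero_in_I by (simp add: delay_time_def)

lemma delay_time_in_I: "admissible W \<Longrightarrow> t \<in> I \<Longrightarrow> delay_time W t \<in> I"
  using abs_delay_time_le[of W t] by auto

lemma state_in_Neps: "admissible W \<Longrightarrow> t \<in> I \<Longrightarrow> state W t \<in> Neps nrm P \<epsilon>"
  unfolding state_def
  by (intro in_Neps_if_close nrm_primitive_le admissible_dist_P delay_time_in_I) auto

lemma state_0: "admissible W \<Longrightarrow> state W 0 = (0, 0, 0, P, P)"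
  by (simp add: state_def delay_time_def admissible_def)

lemma nrm_primitive_diff_le:
  assumes "continuous_on I W" "continuous_on I V" "\<forall>u\<in>I. nrm (W u - V u) \<le> d" "t \<in> I"
  shows "nrm (primitive W t - primitive V t) \<le> c\<^sup>2 * d * \<delta>"
proof -
  have "((\<lambda>u. primitive W u - primitive V u) has_vector_derivative W u - V u) (at u within I)"
    if "u \<in> I" for u
    using assms(1,2) that by (intro has_vector_derivative_diff primitive_has_vector_derivative)
  then have "nrm ((primitive W t - primitive V t) - (primitive W 0 - primitive V 0))
      \<le> c\<^sup>2 * d * \<bar>t - 0\<bar>"
    using assms(3,4) zero_in_I by (intro nrm_diff_le_of_vector_derivative) auto
  then have "nrm (primitive W t - primitive V t) \<le> c\<^sup>2 * d * \<bar>t\<bar>"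
    by simp
  also have "\<dots> \<le> c\<^sup>2 * d * \<delta>"
  proof (intro mult_left_mono)
    show "0 \<le> c\<^sup>2 * d"
      using assms(3) zero_in_I nrm_nonneg[of "W 0 - V 0"] by fastforce
  qed (use assms(4) in auto)
  finally show ?thesis .
qed

lemma admissible_state_map:
  assumes W: "admissible W"
  shows "admissible (\<lambda>t. H (state W t))"
proof -
  have "nrm (H (state W s) - H (state W t)) \<le> W_lip * \<bar>s - t\<bar>" if s: "s \<in> I" and t: "t \<in> I" for s t
  proof -
    define a b where "a = delay_time W s" and "b = delay_time W t"
    have ab: "a \<in> I" "b \<in> I" "\<bar>a - b\<bar> \<le> \<bar>s - t\<bar>"
      using delay_time_in_I[OF W] delay_time_lipschitz[OF W s t] s t by (auto simp: a_def b_def)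
    define X1 where "X1 = (t, primitive W t, primitive W b, W t, W b)"
    define X2 where "X2 = (s, primitive W t, primitive W b, W t, W b)"
    define X3 where "X3 = (s, primitive W s, primitive W a, W t, W b)"
    define X4 where "X4 = (s, primitive W s, primitive W a, W s, W a)"
    have X: "X1 \<in> Neps nrm P \<epsilon>" "X2 \<in> Neps nrm P \<epsilon>" "X3 \<in> Neps nrm P \<epsilon>" "X4 \<in> Neps nrm P \<epsilon>"
      using s t ab unfolding X1_def X2_def X3_def X4_def
      by (auto intro!: in_Neps_if_close nrm_primitive_le[OF W] admissible_dist_P[OF W])
    have "nrm (H X2 - H X1) \<le> \<Lambda> * \<bar>s - t\<bar>"
      using lip_t[OF X(1,2)[unfolded X1_def X2_def]] by (simp add: X1_def X2_def)
    moreover have "nrm (H X3 - H X2) \<le> L0 * (Z_lip * \<bar>s - t\<bar>) + L1 * (Z_lip * \<bar>s - t\<bar>)"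
    proof -
      have "nrm (primitive W a - primitive W b) \<le> Z_lip * \<bar>s - t\<bar>"
        using primitive_lipschitz[OF W ab(1,2)] mult_left_mono[OF ab(3) Z_lip_nonneg] by linarith
      then show ?thesis
        using lip_z[OF X(2,3)[unfolded X2_def X3_def]] primitive_lipschitz[OF W s t] L
        unfolding X2_def X3_def by (meson add_mono mult_left_mono order_trans)
    qed
    moreover have "nrm (H X4 - H X3) \<le> C0 * (W_lip * \<bar>s - t\<bar>) + C1 * (W_lip * \<bar>s - t\<bar>)"
    proof -
      have "nrm (W a - W b) \<le> W_lip * \<bar>s - t\<bar>"
        using admissible_lipschitz[OF W ab(1,2)] mult_left_mono[OF ab(3) W_lip_nonneg] by linarith
      then show ?thesis
        using lip_x[OF X(3,4)[unfolded X3_def X4_def]] admissible_lipschitz[OF W s t] C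
        unfolding X3_def X4_def by (meson add_mono mult_left_mono order_trans)
    qed
    ultimately have "nrm (H X4 - H X1) \<le> (\<Lambda> + (L0 + L1) * Z_lip + (C0 + C1) * W_lip) * \<bar>s - t\<bar>"
      using nrm_triangle_diff[of "H X4" "H X1" "H X3"] nrm_triangle_diff[of "H X3" "H X1" "H X2"]
      by (simp add: algebra_simps)
    then show ?thesis
      by (simp add: W_lip_eq X1_def X4_def state_def a_def b_def)
  qed
  then show ?thesis
    using W state_0[OF W] P_fix h1_bound[OF state_in_Neps[OF W]] by (simp add: admissible_def)
qed

lemma state_map_contraction:
  assumes W: "admissible W" and V: "admissible V"
    and d: "\<forall>u\<in>I. nrm (W u - V u) \<le> d" and t: "t \<in> I"
  shows "nrm (H (state W t) - H (state V t)) \<le> (1 + (C0 + C1)) / 2 * d"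
proof -
  define a b where "a = delay_time W t" and "b = delay_time V t"
  have ab: "a \<in> I" "b \<in> I"
    using delay_time_in_I W V t by (auto simp: a_def b_def)
  have d0: "0 \<le> d"
    using d zero_in_I nrm_nonneg[of "W 0 - V 0"] by fastforce
  have prim_t: "nrm (primitive V u - primitive W u) \<le> c\<^sup>2 * d * \<delta>" if "u \<in> I" for u
    using nrm_primitive_diff_le[OF admissible_continuous_on[OF W] admissible_continuous_on[OF V] d that]
    by (simp add: nrm_minus_commute)
  have "\<bar>b - a\<bar> \<le> c * nrm (primitive V t - primitive W t)"
    using abs_component_le_nrm[of "primitive V t - primitive W t" i1] by (simp add: a_def b_def delay_time_def)
  also have "\<dots> \<le> c * (c\<^sup>2 * d * \<delta>)"
    using prim_t[OF t] c_ge_1 by (intro mult_left_mono) auto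
  finally have ba: "\<bar>b - a\<bar> \<le> c ^ 3 * d * \<delta>"
    by (simp add: power2_eq_square power3_eq_cube mult_ac)
  define Y1 where "Y1 = (t, primitive W t, primitive W a, W t, W a)"
  define Y2 where "Y2 = (t, primitive V t, primitive V b, W t, W a)"
  define Y3 where "Y3 = (t, primitive V t, primitive V b, V t, V b)"
  have Y: "Y1 \<in> Neps nrm P \<epsilon>" "Y2 \<in> Neps nrm P \<epsilon>" "Y3 \<in> Neps nrm P \<epsilon>"
    using t ab unfolding Y1_def Y2_def Y3_def
    by (auto intro!: in_Neps_if_close nrm_primitive_le W V admissible_dist_P)
  have "nrm (primitive V b - primitive W a) \<le> Z_lip * (c ^ 3 * d * \<delta>) + c\<^sup>2 * d * \<delta>"
    using nrm_triangle_diff[of "primitive V b" "primitive W a" "primitive V a"]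
      primitive_lipschitz[OF V ab(2,1)] prim_t[OF ab(1)] mult_left_mono[OF ba Z_lip_nonneg]
    by linarith
  then have "L0 * nrm (primitive V t - primitive W t) + L1 * nrm (primitive V b - primitive W a)
      \<le> L0 * (c\<^sup>2 * d * \<delta>) + L1 * (Z_lip * (c ^ 3 * d * \<delta>) + c\<^sup>2 * d * \<delta>)"
    using prim_t[OF t] L by (intro add_mono mult_left_mono)
  then have "nrm (H Y2 - H Y1) \<le> L0 * (c\<^sup>2 * d * \<delta>) + L1 * (Z_lip * (c ^ 3 * d * \<delta>) + c\<^sup>2 * d * \<delta>)"
    using lip_z[OF Y(1,2)[unfolded Y1_def Y2_def]] unfolding Y1_def Y2_def by linarith
  moreover have "nrm (V b - W a) \<le> W_lip * (c ^ 3 * d * \<delta>) + d"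
    using nrm_triangle_diff[of "V b" "W a" "V a"] admissible_lipschitz[OF V ab(2,1)]
      mult_left_mono[OF ba W_lip_nonneg] d ab(1) nrm_minus_commute[of "V a" "W a"]
    by fastforce
  then have "C0 * nrm (V t - W t) + C1 * nrm (V b - W a) \<le> C0 * d + C1 * (W_lip * (c ^ 3 * d * \<delta>) + d)"
    using d t nrm_minus_commute[of "V t" "W t"] C by (intro add_mono mult_left_mono) auto
  then have "nrm (H Y3 - H Y2) \<le> C0 * d + C1 * (W_lip * (c ^ 3 * d * \<delta>) + d)"
    using lip_x[OF Y(2,3)[unfolded Y2_def Y3_def]] unfolding Y2_def Y3_def by linarith
  ultimately have "nrm (H Y1 - H Y3) \<le> (C0 + C1) * d + d * (\<delta> * gain)"
    using nrm_triangle_diff[of "H Y3" "H Y1" "H Y2"] nrm_minus_commute[of "H Y1" "H Y3"]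
    by (simp add: gain_def algebra_simps power2_eq_square power3_eq_cube)
  also have "\<dots> \<le> (C0 + C1) * d + d * ((1 - (C0 + C1)) / 2)"
    using \<delta>_gain_le d0 by (intro add_left_mono mult_left_mono)
  finally show ?thesis
    by (simp add: Y1_def Y3_def state_def a_def b_def field_simps)
qed

lemma admissible_pointwise_limit:
  assumes f: "\<And>k. admissible (f k)" and lim: "\<And>t. t \<in> I \<Longrightarrow> (\<lambda>k. f k t) \<longlonglongrightarrow> g t"
  shows "admissible g"
proof -
  have "(\<lambda>k. f k 0) = (\<lambda>k. P)"
    using f by (simp add: admissible_def)
  then have "g 0 = P"
    using lim[OF zero_in_I] LIMSEQ_unique tendsto_const by metis
  moreover have "nrm (g s - g t) \<le> W_lip * \<bar>s - t\<bar>" if "s \<in> I" "t \<in> I" for s t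
    using admissible_lipschitz[OF f that]
    by (intro LIMSEQ_le_const2[OF tendsto_nrm[OF tendsto_diff[OF lim lim]]] that) auto
  moreover have "\<bar>g t $ i1\<bar> \<le> 1" if "t \<in> I" for t
    using admissible_component_bound[OF f that]
    by (intro LIMSEQ_le_const2[OF tendsto_rabs[OF tendsto_vec_nth[OF lim]]] that) auto
  ultimately show ?thesis
    by (simp add: admissible_def)
qed

lemma admissible_fixed_point:
  obtains W where "admissible W" "\<And>t. t \<in> I \<Longrightarrow> H (state W t) = W t"
proof (rule contraction_fixed_point[where S=admissible and T="\<lambda>W t. H (state W t)" and I=I
      and W_init="\<lambda>_. P" and q="(1 + (C0 + C1)) / 2" and D="W_lip * \<delta>"])
  show P: "admissible (\<lambda>_. P)"
    using P1 W_lip_nonneg by (simp add: admissible_def)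
  show "nrm (H (state (\<lambda>_. P) t) - P) \<le> W_lip * \<delta>" if "t \<in> I" for t
    using admissible_dist_P[OF admissible_state_map[OF P] that] by simp
  show "0 \<le> (1 + (C0 + C1)) / 2" "(1 + (C0 + C1)) / 2 < 1"
    using C by auto
  show "\<And>f g. (\<And>k. admissible (f k)) \<Longrightarrow> (\<And>t. t \<in> I \<Longrightarrow> (\<lambda>k. f k t) \<longlonglongrightarrow> g t) \<Longrightarrow> admissible g"
    by (rule admissible_pointwise_limit)
  show "\<And>W. admissible W \<Longrightarrow> admissible (\<lambda>t. H (state W t))"
    by (rule admissible_state_map)
  show "\<forall>t\<in>I. nrm (H (state W t) - H (state V t)) \<le> (1 + (C0 + C1)) / 2 * d"
    if "admissible W" "admissible V" "\<forall>t\<in>I. nrm (W t - V t) \<le> d" for W V d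
    using state_map_contraction[OF that] by blast
qed (use that in blast)

end

theorem theorem4p1:
  fixes nrm :: "real^'n \<Rightarrow> real"
    and U :: "(real \<times> (real^'n) \<times> (real^'n) \<times> (real^'n) \<times> (real^'n)) set"
    and H :: "real \<times> (real^'n) \<times> (real^'n) \<times> (real^'n) \<times> (real^'n) \<Rightarrow> real^'n"
    and P :: "real^'n"
    and i1 :: 'n
    and \<epsilon> \<Lambda> L0 L1 C0 C1 :: real
  assumes nrm: "is_norm nrm"
    and U_open: "open U"
    and H_cont: "continuous_on U H"
    and P_fix: "P = H (0, 0, 0, P, P)"
    and P1: "\<bar>P $ i1\<bar> \<le> 1"
    and eps: "\<epsilon> > 0"
    and N_sub: "Neps nrm P \<epsilon> \<subseteq> U"
    and Lam: "\<Lambda> > 0"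
    and lip_t: "\<And>t t' z0 z1 x0 x1.
        (t, z0, z1, x0, x1) \<in> Neps nrm P \<epsilon> \<Longrightarrow> (t', z0, z1, x0, x1) \<in> Neps nrm P \<epsilon> \<Longrightarrow>
        nrm (H (t', z0, z1, x0, x1) - H (t, z0, z1, x0, x1)) \<le> \<Lambda> * \<bar>t' - t\<bar>"
    and L: "L0 > 0" "L1 > 0"
    and lip_z: "\<And>t z0 z1 z0' z1' x0 x1.
        (t, z0, z1, x0, x1) \<in> Neps nrm P \<epsilon> \<Longrightarrow> (t, z0', z1', x0, x1) \<in> Neps nrm P \<epsilon> \<Longrightarrow>
        nrm (H (t, z0', z1', x0, x1) - H (t, z0, z1, x0, x1))
          \<le> L0 * nrm (z0' - z0) + L1 * nrm (z1' - z1)"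
    and C: "C0 \<ge> 0" "C1 \<ge> 0" "C0 + C1 < 1"
    and lip_x: "\<And>t z0 z1 x0 x1 x0' x1'.
        (t, z0, z1, x0, x1) \<in> Neps nrm P \<epsilon> \<Longrightarrow> (t, z0, z1, x0', x1') \<in> Neps nrm P \<epsilon> \<Longrightarrow>
        nrm (H (t, z0, z1, x0', x1') - H (t, z0, z1, x0, x1))
          \<le> C0 * nrm (x0' - x0) + C1 * nrm (x1' - x1)"
    and h1_bound: "\<And>X. X \<in> Neps nrm P \<epsilon> \<Longrightarrow> \<bar>H X $ i1\<bar> \<le> 1"
  shows "\<exists>\<delta> > 0. \<exists>Z Z' :: real \<Rightarrow> real^'n.
           (\<forall>t \<in> {-\<delta>..\<delta>}. (Z has_vector_derivative Z' t) (at t within {-\<delta>..\<delta>})) \<and>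
           continuous_on {-\<delta>..\<delta>} Z' \<and>
           (\<forall>t \<in> {-\<delta>..\<delta>}.
              \<bar>Z t $ i1\<bar> \<le> \<bar>t\<bar> \<and>
              (t, Z t, Z (Z t $ i1), Z' t, Z' (Z t $ i1)) \<in> Neps nrm P \<epsilon> \<and>
              Z' t = H (t, Z t, Z (Z t $ i1), Z' t, Z' (Z t $ i1))) \<and>
           Z 0 = 0 \<and> Z' 0 = P"
proof -
  interpret vector_norm nrm
    using nrm by (rule vector_norm.intro)
  obtain c where "1 \<le> c" "\<And>x. nrm x \<le> c * norm x" "\<And>x. norm x \<le> c * nrm x"
    using equivalence_constant by blast
  then interpret neutral_delay_equation nrm c H P i1 \<epsilon> \<Lambda> L0 L1 C0 C1
    using P_fix P1 eps Lam lip_t L lip_z C lip_x h1_bound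
    by unfold_locales auto
  obtain W where W: "admissible W" "\<And>t. t \<in> I \<Longrightarrow> H (state W t) = W t"
    using admissible_fixed_point by blast
  have "\<forall>t\<in>I. \<bar>delay_time W t\<bar> \<le> \<bar>t\<bar> \<and> state W t \<in> Neps nrm P \<epsilon> \<and> W t = H (state W t)"
    using abs_delay_time_le[OF W(1)] state_in_Neps[OF W(1)] W(2) by simp
  moreover have "W 0 = P"
    using W(1) by (simp add: admissible_def)
  ultimately show ?thesis
    using \<delta>_pos primitive_0 primitive_has_vector_derivative admissible_continuous_on[OF W(1)]
    unfolding state_def delay_time_def by blast
qed

end
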